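(* A digraph $D$ of order $n$ is minimally strong subgraph $(2,n-2)$-arc-connected if and only if $D$ is obtained from the complete digraph $\overleftrightarrow{K}_n$ by deleting an arc set $M$ such that $\overleftrightarrow{K}_n[M]$ is a union of vertex-disjoint cycles which cover all but at most one vertex of $\overleftrightarrow{K}_n$.
   Context: Digraphs are finite, without loops or parallel arcs; cycles are directed cycles, including 2-cycles. $\overleftrightarrow{K}_n$ is the complete digraph on $n$ vertices; $\overleftrightarrow{K}_n[M]$ is the subdigraph formed by the arcs of $M$ and their end-vertices. For $S\subseteq V(D)$, $\lambda_S(D)$ is the maximum number of pairwise arc-disjoint strong subgraphs of $D$ containing $S$, and $\lambda_k(D)=\min\{\lambda_S(D): S\subseteq V(D), |S|=k\}$. $D$ is minimally strong subgraph $(k,\ell)$-arc-connected if $\lambda_k(D)\ge\ell$ but $\lambda_k(D-e)\le \ell-1$ for every arc $e$ of $D$. *)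

theory Defs
  imports Main
begin

definition digraph :: "'a set \<Rightarrow> ('a \<times> 'a) set \<Rightarrow> bool" where
  "digraph V A \<longleftrightarrow> finite V \<and> A \<subseteq> V \<times> V \<and> (\<forall>(u,v)\<in>A. u \<noteq> v)"

definition complete_arcs :: "'a set \<Rightarrow> ('a \<times> 'a) set" where
  "complete_arcs V = {(u,v). u \<in> V \<and> v \<in> V \<and> u \<noteq> v}"

definition strong_subgraph :: "'a set \<Rightarrow> ('a \<times> 'a) set \<Rightarrow> 'a set \<times> ('a \<times> 'a) set \<Rightarrow> bool" where
  "strong_subgraph V A H \<longleftrightarrow>
     fst H \<subseteq> V \<and> snd H \<subseteq> A \<and> snd H \<subseteq> fst H \<times> fst H \<and>
     (\<forall>u\<in>fst H. \<forall>v\<in>fst H. (u,v) \<in> (snd H)\<^sup>*)"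

definition lambda_S :: "'a set \<Rightarrow> ('a \<times> 'a) set \<Rightarrow> 'a set \<Rightarrow> nat" where
  "lambda_S V A S = Max {k. \<exists>H :: nat \<Rightarrow> 'a set \<times> ('a \<times> 'a) set.
      (\<forall>i<k. strong_subgraph V A (H i) \<and> S \<subseteq> fst (H i)) \<and>
      (\<forall>i<k. \<forall>j<k. i \<noteq> j \<longrightarrow> snd (H i) \<inter> snd (H j) = {})}"

definition lambda_k :: "'a set \<Rightarrow> ('a \<times> 'a) set \<Rightarrow> nat \<Rightarrow> nat" where
  "lambda_k V A k = Min (lambda_S V A ` {S. S \<subseteq> V \<and> card S = k})"

text \<open>Minimally strong subgraph (k,l)-arc-connected; "\<le> l - 1" is written "< l".\<close>
definition min_strong_arc_conn :: "'a set \<Rightarrow> ('a \<times> 'a) set \<Rightarrow> nat \<Rightarrow> nat \<Rightarrow> bool" where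
  "min_strong_arc_conn V A k l \<longleftrightarrow>
     lambda_k V A k \<ge> l \<and> (\<forall>e\<in>A. lambda_k V (A - {e}) k < l)"

text \<open>A (directed) cycle given by a list of distinct vertices v0 ... v(m-1), m \<ge> 2
 (2-cycles allowed), with arcs (v_i, v_(i+1 mod m)).\<close>
definition is_cycle :: "'a set \<Rightarrow> 'a list \<Rightarrow> bool" where
  "is_cycle V vs \<longleftrightarrow> distinct vs \<and> length vs \<ge> 2 \<and> set vs \<subseteq> V"

definition cycle_arcs :: "'a list \<Rightarrow> ('a \<times> 'a) set" where
  "cycle_arcs vs = {(vs ! i, vs ! ((i + 1) mod length vs)) | i. i < length vs}"

definition disjoint_cycles_cover :: "'a set \<Rightarrow> ('a \<times> 'a) set \<Rightarrow> bool" where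
  "disjoint_cycles_cover V M \<longleftrightarrow>
     (\<exists>C :: 'a list set. finite C \<and> (\<forall>c\<in>C. is_cycle V c) \<and>
        (\<forall>c\<in>C. \<forall>c'\<in>C. c \<noteq> c' \<longrightarrow> set c \<inter> set c' = {}) \<and>
        M = (\<Union>c\<in>C. cycle_arcs c) \<and>
        card (V - (\<Union>c\<in>C. set c)) \<le> 1)"

end

theory Submission
  imports Defs "HOL-Combinatorics.Cycles"
begin

(* Write D = K_n - M, where M is the set of missing arcs. A strong subgraph containing two
   vertices u, w uses an arc leaving u, so lambda_2(D) is at most every out-degree n - 1 - d_M^+(u),
   and dually for in-degrees. Hence lambda_2(D) >= n - 2 forces M to have maximum in- and
   out-degree at most 1. Conversely, for such M, every pair x, y and every third vertex z give an
   x-y connection and a y-x connection through z avoiding M, arc-disjoint for distinct z; so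
   lambda_2(D) >= n - 2 holds exactly when M has both maximum degrees at most 1.
   Minimality then says that no arc (p, q) of D can be added to M, i.e. p has a missing out-arc
   or q a missing in-arc. Since |Domain M| = |M| = |Range M|, this means Domain M = Range M
   misses at most one vertex: M is the graph of a fixed-point-free permutation of all but at most
   one vertex, that is, a union of disjoint cycles covering all but at most one vertex. *)

section \<open>Packings of strong subgraphs\<close>

definition strong_packing :: "'a set \<Rightarrow> ('a \<times> 'a) set \<Rightarrow> 'a set \<Rightarrow> nat \<Rightarrow> bool" where
  "strong_packing V A S k \<longleftrightarrow> (\<exists>H :: nat \<Rightarrow> 'a set \<times> ('a \<times> 'a) set.
      (\<forall>i<k. strong_subgraph V A (H i) \<and> S \<subseteq> fst (H i)) \<and>
      (\<forall>i<k. \<forall>j<k. i \<noteq> j \<longrightarrow> snd (H i) \<inter> snd (H j) = {}))"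

lemma lambda_S_eq_Max: "lambda_S V A S = Max {k. strong_packing V A S k}"
  unfolding lambda_S_def strong_packing_def ..

lemma strong_packing_of_family:
  assumes "finite Z"
    and "\<And>z. z \<in> Z \<Longrightarrow> strong_subgraph V A (H z) \<and> S \<subseteq> fst (H z)"
    and "\<And>z z'. z \<in> Z \<Longrightarrow> z' \<in> Z \<Longrightarrow> z \<noteq> z' \<Longrightarrow> snd (H z) \<inter> snd (H z') = {}"
  shows "strong_packing V A S (card Z)"
proof -
  obtain g where g: "bij_betw g {..<card Z} Z"
    using ex_bij_betw_nat_finite[OF assms(1)] by (auto simp: atLeast0LessThan)
  show ?thesis
    unfolding strong_packing_def
  proof (intro exI[of _ "H \<circ> g"] conjI allI impI)
    fix i
    assume "i < card Z"
    then show "strong_subgraph V A ((H \<circ> g) i)" "S \<subseteq> fst ((H \<circ> g) i)"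
      using assms(2) bij_betw_apply[OF g] by auto
  next
    fix i j
    assume ij: "i < card Z" "j < card Z" "i \<noteq> j"
    then have "g i \<noteq> g j"
      using g by (auto simp: bij_betw_def inj_on_def)
    then show "snd ((H \<circ> g) i) \<inter> snd ((H \<circ> g) j) = {}"
      using assms(3) bij_betw_apply[OF g] ij by auto
  qed
qed

lemma strong_subgraph_converse:
  "strong_subgraph V A (W, B) \<Longrightarrow> strong_subgraph V (A\<inverse>) (W, B\<inverse>)"
  unfolding strong_subgraph_def by (auto simp: rtrancl_converse)

lemma strong_packing_converse:
  assumes "strong_packing V A S k"
  shows "strong_packing V (A\<inverse>) S k"
proof -
  obtain H where H: "\<forall>i<k. strong_subgraph V A (H i) \<and> S \<subseteq> fst (H i)"
    "\<forall>i<k. \<forall>j<k. i \<noteq> j \<longrightarrow> snd (H i) \<inter> snd (H j) = {}"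
    using assms unfolding strong_packing_def by blast
  let ?H = "\<lambda>i. (fst (H i), (snd (H i))\<inverse>)"
  have "strong_subgraph V (A\<inverse>) (?H i)" if "i < k" for i
    using strong_subgraph_converse[of V A "fst (H i)" "snd (H i)"] H(1) that by simp
  moreover have "snd (?H i) \<inter> snd (?H j) = {}" if "i < k" "j < k" "i \<noteq> j" for i j
    using H(2) that by auto
  ultimately show ?thesis
    unfolding strong_packing_def using H(1) by (intro exI[of _ ?H]) auto
qed

lemma lambda_k_converse: "lambda_k V (A\<inverse>) k = lambda_k V A k"
proof -
  have "strong_packing V (A\<inverse>) S = strong_packing V A S" for S
    using strong_packing_converse[of V A] strong_packing_converse[of V "A\<inverse>"] by fastforce
  then show ?thesis
    unfolding lambda_k_def lambda_S_eq_Max by simp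
qed

lemma strong_packing_le_out_degree:
  assumes "digraph V A" "strong_packing V A S k" "u \<in> S" "w \<in> S" "u \<noteq> w"
  shows "k \<le> card (A `` {u})"
proof -
  obtain H where H: "\<And>i. i < k \<Longrightarrow> strong_subgraph V A (H i) \<and> S \<subseteq> fst (H i)"
    and disj: "\<And>i j. i < k \<Longrightarrow> j < k \<Longrightarrow> i \<noteq> j \<Longrightarrow> snd (H i) \<inter> snd (H j) = {}"
    using assms(2) unfolding strong_packing_def by blast
  have "\<exists>v. (u, v) \<in> snd (H i)" if "i < k" for i
  proof -
    have "(u, w) \<in> (snd (H i))\<^sup>*"
      using H[OF that] assms(3,4) unfolding strong_subgraph_def by blast
    then show ?thesis
      using assms(5) by (cases rule: converse_rtranclE) auto
  qed
  then obtain out where out: "\<And>i. i < k \<Longrightarrow> (u, out i) \<in> snd (H i)"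
    by metis
  have "inj_on out {..<k}"
  proof (rule inj_onI)
    fix i j
    assume "i \<in> {..<k}" "j \<in> {..<k}" "out i = out j"
    then show "i = j"
      using out[of i] out[of j] disj[of i j] by auto
  qed
  moreover have "out ` {..<k} \<subseteq> A `` {u}"
  proof -
    have "snd (H i) \<subseteq> A" if "i < k" for i
      using H[OF that] unfolding strong_subgraph_def by blast
    then show ?thesis
      using out by blast
  qed
  moreover have "finite (A `` {u})"
    using assms(1) unfolding digraph_def by (auto intro: finite_subset)
  ultimately have "card {..<k} \<le> card (A `` {u})"
    by (rule card_inj_on_le)
  then show ?thesis
    by simp
qed

lemma
  assumes "digraph V A" "u \<in> S" "w \<in> S" "u \<noteq> w"
  shows strong_packing_le_lambda_S: "strong_packing V A S k \<Longrightarrow> k \<le> lambda_S V A S"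
    and lambda_S_le_out_degree: "lambda_S V A S \<le> card (A `` {u})"
proof -
  have fin: "finite {k. strong_packing V A S k}"
    using strong_packing_le_out_degree[OF assms(1) _ assms(2-4)]
    unfolding finite_nat_set_iff_bounded_le by blast
  moreover have "strong_packing V A S 0"
    unfolding strong_packing_def by simp
  ultimately have "strong_packing V A S (lambda_S V A S)"
    unfolding lambda_S_eq_Max using Max_in by blast
  then show "lambda_S V A S \<le> card (A `` {u})"
    using strong_packing_le_out_degree[OF assms(1) _ assms(2-4)] by blast
  show "strong_packing V A S k \<Longrightarrow> k \<le> lambda_S V A S"
    unfolding lambda_S_eq_Max using fin by simp
qed

lemma le_lambda_2I:
  assumes "digraph V A" "card V \<ge> 2"
    and "\<And>x y. x \<in> V \<Longrightarrow> y \<in> V \<Longrightarrow> x \<noteq> y \<Longrightarrow> strong_packing V A {x, y} l"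
  shows "l \<le> lambda_k V A 2"
proof -
  have "finite {S. S \<subseteq> V \<and> card S = 2}"
    using assms(1) unfolding digraph_def by simp
  moreover have "{S. S \<subseteq> V \<and> card S = 2} \<noteq> {}"
    using obtain_subset_with_card_n[OF assms(2)] by blast
  moreover have "l \<le> lambda_S V A S" if "S \<subseteq> V" "card S = 2" for S
  proof -
    obtain x y where "S = {x, y}" "x \<noteq> y"
      using \<open>card S = 2\<close> card_2_iff by metis
    then show ?thesis
      using strong_packing_le_lambda_S[OF assms(1), of x S y] assms(3)[of x y] \<open>S \<subseteq> V\<close> by auto
  qed
  ultimately show ?thesis
    unfolding lambda_k_def by simp
qed

lemma lambda_2_le_out_degree:
  assumes "digraph V A" "card V \<ge> 2" "u \<in> V"
  shows "lambda_k V A 2 \<le> card (A `` {u})"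
proof -
  have "finite V"
    using assms(1) unfolding digraph_def by blast
  obtain w where "w \<in> V" "w \<noteq> u"
    using assms(2,3) card_le_Suc0_iff_eq[OF \<open>finite V\<close>]
    by (metis leD less_Suc_eq_le numeral_2_eq_2)
  then have "lambda_k V A 2 \<le> lambda_S V A {u, w}"
    unfolding lambda_k_def using \<open>finite V\<close> assms(3) by (intro Min_le) auto
  also have "\<dots> \<le> card (A `` {u})"
    using lambda_S_le_out_degree[OF assms(1), of u "{u, w}" w] \<open>w \<noteq> u\<close> by simp
  finally show ?thesis .
qed

section \<open>Connections avoiding a partial permutation\<close>

definition connector :: "('a \<times> 'a) set \<Rightarrow> 'a \<Rightarrow> 'a \<Rightarrow> bool" where
  "connector P s t \<longleftrightarrow> (s, t) \<in> P\<^sup>* \<and> (\<forall>(u, v) \<in> P. (s, u) \<in> P\<^sup>* \<and> (v, t) \<in> P\<^sup>*)"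

lemma strong_subgraph_connectors:
  assumes "connector P x y" "connector Q y x" "P \<union> Q \<subseteq> A" "A \<subseteq> V \<times> V" "x \<in> V" "y \<in> V"
  shows "strong_subgraph V A ({x, y} \<union> Field (P \<union> Q), P \<union> Q)"
proof -
  let ?E = "P \<union> Q"
  have P: "P\<^sup>* \<subseteq> ?E\<^sup>*" and Q: "Q\<^sup>* \<subseteq> ?E\<^sup>*"
    by (simp_all add: rtrancl_mono)
  have xy: "(x, y) \<in> ?E\<^sup>*" and yx: "(y, x) \<in> ?E\<^sup>*"
    using assms(1,2) P Q unfolding connector_def by blast+
  have arc: "(x, a) \<in> ?E\<^sup>* \<and> (b, x) \<in> ?E\<^sup>*" if "(a, b) \<in> ?E" for a b
  proof (cases "(a, b) \<in> P")
    case True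
    then have "(x, a) \<in> ?E\<^sup>*" "(b, y) \<in> ?E\<^sup>*"
      using assms(1) P unfolding connector_def by auto
    then show ?thesis
      using yx by (meson rtrancl_trans)
  next
    case False
    then have "(y, a) \<in> ?E\<^sup>*" "(b, x) \<in> ?E\<^sup>*"
      using that assms(2) Q unfolding connector_def by auto
    then show ?thesis
      using xy by (meson rtrancl_trans)
  qed
  have hub: "(x, u) \<in> ?E\<^sup>* \<and> (u, x) \<in> ?E\<^sup>*" if "u \<in> {x, y} \<union> Field ?E" for u
    using that xy yx arc unfolding Field_def
    by (blast intro: rtrancl_into_rtrancl converse_rtrancl_into_rtrancl)
  have "Field ?E \<subseteq> V"
    using assms(3,4) unfolding Field_def by blast
  show ?thesis
    unfolding strong_subgraph_def fst_conv snd_conv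
  proof (intro conjI ballI)
    show "{x, y} \<union> Field ?E \<subseteq> V"
      using \<open>Field ?E \<subseteq> V\<close> assms(5,6) by blast
    show "?E \<subseteq> ({x, y} \<union> Field ?E) \<times> ({x, y} \<union> Field ?E)"
      by (auto intro: FieldI1 FieldI2)
    fix u v
    assume "u \<in> {x, y} \<union> Field ?E" "v \<in> {x, y} \<union> Field ?E"
    then show "(u, v) \<in> ?E\<^sup>*"
      using hub by (meson rtrancl_trans)
  qed (fact assms(3))
qed

lemma connector_converse: "connector P s t \<Longrightarrow> connector (P\<inverse>) t s"
  unfolding connector_def by (auto simp: rtrancl_converse)

(* The arcs of an x-y connection through z avoiding M. If z -> y is missing, z reaches y through
   the vertex a with x -> a missing: the detour of a is the single arc x -> y, so z -> a -> y is
   unused elsewhere. If x has no such a, the arc x -> y is left free for z. *)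
definition detour :: "('a \<times> 'a) set \<Rightarrow> 'a \<Rightarrow> 'a \<Rightarrow> 'a \<Rightarrow> ('a \<times> 'a) set" where
  "detour M x y z =
     (if (x, z) \<in> M then {(x, y)}
      else if (z, y) \<notin> M then {(x, z), (z, y)}
      else if M `` {x} \<subseteq> {y} then {(x, y)}
      else let a = THE a. (x, a) \<in> M in {(x, z), (z, a), (a, y)})"

locale near_complete_pair =
  fixes V :: "'a set" and M :: "('a \<times> 'a) set" and x y :: 'a
  assumes missing_arcs: "M \<subseteq> complete_arcs V"
    and out_unique: "single_valued M"
    and in_unique: "single_valued (M\<inverse>)"
    and x_in: "x \<in> V" and y_in: "y \<in> V" and x_neq_y: "x \<noteq> y"
begin

lemma out_eq: "(u, v) \<in> M \<Longrightarrow> (u, w) \<in> M \<Longrightarrow> v = w"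
  using out_unique by (rule single_valuedD)

lemma in_eq: "(v, u) \<in> M \<Longrightarrow> (w, u) \<in> M \<Longrightarrow> v = w"
  using in_unique by (auto dest: single_valuedD)

lemma converse: "near_complete_pair V (M\<inverse>) x y"
  using missing_arcs out_unique in_unique x_in y_in x_neq_y
  by unfold_locales (auto simp: complete_arcs_def)

lemma detour_cases:
  obtains (skip) "(x, z) \<in> M" "detour M x y z = {(x, y)}"
  | (via) "(x, z) \<notin> M" "(z, y) \<notin> M" "detour M x y z = {(x, z), (z, y)}"
  | (direct) "(x, z) \<notin> M" "(z, y) \<in> M" "M `` {x} \<subseteq> {y}" "detour M x y z = {(x, y)}"
  | (reroute) a where "(x, z) \<notin> M" "(z, y) \<in> M" "(x, a) \<in> M" "a \<noteq> y"
      "detour M x y z = {(x, z), (z, a), (a, y)}"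
proof -
  have "(THE a. (x, a) \<in> M) = a" if "(x, a) \<in> M" for a
    using that out_unique by (auto dest: single_valuedD)
  then show thesis
    using that unfolding detour_def by (cases "M `` {x} \<subseteq> {y}") (auto simp: Let_def)
qed

lemma connector_detour: "connector (detour M x y z) x y"
  by (cases rule: detour_cases[of z]) (auto simp: connector_def rtrancl_insert)

lemma detour_subset:
  assumes "z \<in> V - {x, y}"
  shows "detour M x y z \<subseteq> complete_arcs V - M"
proof (cases rule: detour_cases[of z])
  case skip
  then show ?thesis
    using assms x_in y_in x_neq_y by (auto simp: complete_arcs_def dest: out_eq)
next
  case via
  then show ?thesis
    using assms x_in y_in by (auto simp: complete_arcs_def)
next
  case direct
  then show ?thesis
    using assms x_in y_in x_neq_y by (auto simp: complete_arcs_def dest: in_eq)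
next
  case (reroute a)
  then have "a \<in> V" "a \<noteq> z"
    using missing_arcs by (auto simp: complete_arcs_def)
  then show ?thesis
    using reroute assms x_in y_in by (auto simp: complete_arcs_def dest: out_eq in_eq)
qed

lemma detour_arc_shape:
  "(u, v) \<in> detour M x y z \<Longrightarrow> u = x \<or> v = y \<or> ((u, y) \<in> M \<and> (x, v) \<in> M)"
  by (cases rule: detour_cases[of z]) auto

lemma detour_disjoint:
  assumes "z \<in> V - {x, y}" "z' \<in> V - {x, y}" "z \<noteq> z'"
  shows "detour M x y z \<inter> detour M x y z' = {}"
  using assms
  by (cases rule: detour_cases[of z]; cases rule: detour_cases[of z'])
    (auto dest: out_eq in_eq)

lemma detour_converse_disjoint:
  assumes "z \<in> V - {x, y}" "z' \<in> V - {x, y}"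
  shows "detour M x y z \<inter> (detour (M\<inverse>) x y z')\<inverse> = {}"
proof -
  interpret converse: near_complete_pair V "M\<inverse>" x y
    by (rule converse)
  have False if uv: "(u, v) \<in> detour M x y z" and vu: "(v, u) \<in> detour (M\<inverse>) x y z'" for u v
  proof -
    have "u \<noteq> v" "(x, x) \<notin> M" "(y, y) \<notin> M"
      using detour_subset[OF assms(1)] uv missing_arcs by (auto simp: complete_arcs_def)
    then show False
      using detour_arc_shape[OF uv] converse.detour_arc_shape[OF vu] x_neq_y
      by (auto dest: out_eq)
  qed
  then show ?thesis
    by auto
qed

lemma strong_packing_near_complete:
  assumes "finite V"
  shows "strong_packing V (complete_arcs V - M) {x, y} (card V - 2)"
proof -
  interpret converse: near_complete_pair V "M\<inverse>" x y
    by (rule converse)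
  define E where "E z = detour M x y z \<union> (detour (M\<inverse>) x y z)\<inverse>" for z
  have "E z \<subseteq> complete_arcs V - M" if "z \<in> V - {x, y}" for z
    using detour_subset[OF that] converse.detour_subset[OF that]
    unfolding E_def by (auto simp: complete_arcs_def)
  moreover have "complete_arcs V - M \<subseteq> V \<times> V"
    unfolding complete_arcs_def by auto
  ultimately have strong: "strong_subgraph V (complete_arcs V - M) ({x, y} \<union> Field (E z), E z)"
    if "z \<in> V - {x, y}" for z
    unfolding E_def using that x_in y_in
    by (intro strong_subgraph_connectors connector_detour connector_converse converse.connector_detour)
      auto
  have disjoint: "E z \<inter> E z' = {}" if "z \<in> V - {x, y}" "z' \<in> V - {x, y}" "z \<noteq> z'" for z z'
    using detour_disjoint[OF that] converse.detour_disjoint[OF that]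
      detour_converse_disjoint[OF that(1,2)] detour_converse_disjoint[OF that(2,1)]
    unfolding E_def by blast
  have "strong_packing V (complete_arcs V - M) {x, y} (card (V - {x, y}))"
    by (rule strong_packing_of_family[where H = "\<lambda>z. ({x, y} \<union> Field (E z), E z)"])
      (simp_all add: assms strong[simplified] disjoint)
  moreover have "card (V - {x, y}) = card V - 2"
    using assms x_in y_in x_neq_y by (simp add: card_Diff_subset)
  ultimately show ?thesis
    by simp
qed

end

section \<open>Strong subgraph arc-connectivity at least n - 2\<close>

lemma card_out_arcs_add_missing:
  assumes "finite V" "A \<subseteq> complete_arcs V" "u \<in> V"
  shows "card (A `` {u}) + card ((complete_arcs V - A) `` {u}) = card V - 1"
proof -
  have "A `` {u} \<union> (complete_arcs V - A) `` {u} = V - {u}"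
    using assms(2,3) unfolding complete_arcs_def by auto
  moreover have "A `` {u} \<inter> (complete_arcs V - A) `` {u} = {}"
    by auto
  ultimately show ?thesis
    using assms(1,3) by (metis card_Diff_singleton card_Un_disjoint finite_Diff finite_Un)
qed

lemma single_valued_missing_arcs:
  assumes "digraph V A" "card V \<ge> 2" "card V - 2 \<le> lambda_k V A 2"
  shows "single_valued (complete_arcs V - A)"
proof (rule single_valuedI)
  fix u v w
  assume uv: "(u, v) \<in> complete_arcs V - A" and uw: "(u, w) \<in> complete_arcs V - A"
  show "v = w"
  proof (rule ccontr)
    assume "v \<noteq> w"
    have "finite V" "A \<subseteq> complete_arcs V" "u \<in> V"
      using assms(1) uv unfolding digraph_def complete_arcs_def by auto
    then have "card (A `` {u}) + card ((complete_arcs V - A) `` {u}) = card V - 1"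
      by (rule card_out_arcs_add_missing)
    moreover have "card {v, w} \<le> card ((complete_arcs V - A) `` {u})"
      using uv uw \<open>finite V\<close>
      by (intro card_mono finite_subset[OF _ \<open>finite V\<close>]) (auto simp: complete_arcs_def)
    moreover have "card V - 2 \<le> card (A `` {u})"
      using assms(3) lambda_2_le_out_degree[OF assms(1,2) \<open>u \<in> V\<close>] by linarith
    ultimately show False
      using \<open>v \<noteq> w\<close> assms(2) by simp
  qed
qed

lemma digraph_converse: "digraph V A \<Longrightarrow> digraph V (A\<inverse>)"
  unfolding digraph_def by auto

lemma lambda_2_ge_iff:
  assumes "digraph V A" "card V \<ge> 2"
  shows "card V - 2 \<le> lambda_k V A 2 \<longleftrightarrow>
    single_valued (complete_arcs V - A) \<and> single_valued ((complete_arcs V - A)\<inverse>)"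
    (is "_ \<longleftrightarrow> single_valued ?M \<and> single_valued (?M\<inverse>)")
proof
  assume "card V - 2 \<le> lambda_k V A 2"
  moreover have "?M\<inverse> = complete_arcs V - A\<inverse>"
    by (auto simp: complete_arcs_def)
  ultimately show "single_valued ?M \<and> single_valued (?M\<inverse>)"
    using single_valued_missing_arcs[OF assms] 
      single_valued_missing_arcs[OF digraph_converse[OF assms(1)] assms(2)]
    by (simp add: lambda_k_converse)
next
  assume "single_valued ?M \<and> single_valued (?M\<inverse>)"
  moreover have "complete_arcs V - ?M = A" "?M \<subseteq> complete_arcs V" "finite V"
    using assms(1) unfolding digraph_def complete_arcs_def by auto
  ultimately have "strong_packing V A {x, y} (card V - 2)"
    if "x \<in> V" "y \<in> V" "x \<noteq> y" for x y
    using near_complete_pair.strong_packing_near_complete[of V ?M x y] that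
    by (simp add: near_complete_pair_def)
  then show "card V - 2 \<le> lambda_k V A 2"
    by (rule le_lambda_2I[OF assms])
qed

lemma single_valued_insert_iff:
  "single_valued (insert (a, b) r) \<longleftrightarrow> single_valued r \<and> (\<forall>c. (a, c) \<in> r \<longrightarrow> c = b)"
  unfolding single_valued_def by blast

lemma min_strong_2_iff:
  assumes "digraph V A" "card V \<ge> 2"
  defines "M \<equiv> complete_arcs V - A"
  shows "min_strong_arc_conn V A 2 (card V - 2) \<longleftrightarrow>
    single_valued M \<and> single_valued (M\<inverse>) \<and> (\<forall>p \<in> V - Domain M. \<forall>q \<in> V - Range M. p = q)"
proof -
  have critical: "lambda_k V (A - {(p, q)}) 2 < card V - 2 \<longleftrightarrow> p \<in> Domain M \<or> q \<in> Range M"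
    if "(p, q) \<in> A" "single_valued M" "single_valued (M\<inverse>)" for p q
  proof -
    have "complete_arcs V - (A - {(p, q)}) = insert (p, q) M"
      using that(1) assms(1) unfolding M_def digraph_def complete_arcs_def by auto
    moreover have "(insert (p, q) M)\<inverse> = insert (q, p) (M\<inverse>)"
      by auto
    moreover have "(p, q) \<notin> M"
      using that(1) unfolding M_def by simp
    then have "single_valued (insert (p, q) M) \<longleftrightarrow> p \<notin> Domain M"
      and "single_valued (insert (q, p) (M\<inverse>)) \<longleftrightarrow> q \<notin> Range M"
      using that(2,3) by (auto simp: single_valued_insert_iff)
    moreover have "digraph V (A - {(p, q)})"
      using assms(1) unfolding digraph_def by auto
    ultimately have "card V - 2 \<le> lambda_k V (A - {(p, q)}) 2 \<longleftrightarrow> p \<notin> Domain M \<and> q \<notin> Range M"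
      using lambda_2_ge_iff[of V "A - {(p, q)}"] assms(2) by simp
    then show ?thesis
      by (metis not_le)
  qed
  have A_eq: "A = complete_arcs V - M"
    using assms(1) unfolding M_def digraph_def complete_arcs_def by auto
  have "(\<forall>(p, q) \<in> A. p \<in> Domain M \<or> q \<in> Range M) \<longleftrightarrow>
        (\<forall>p \<in> V - Domain M. \<forall>q \<in> V - Range M. p = q)"
    unfolding A_eq complete_arcs_def by (auto 0 3)
  then show ?thesis
    unfolding min_strong_arc_conn_def using lambda_2_ge_iff[OF assms(1,2)] critical
    by (auto simp flip: M_def)
qed

section \<open>Arc sets of disjoint cycles\<close>

lemma cycle_arcs_eq_graph:
  assumes "distinct c"
  shows "cycle_arcs c = (\<lambda>u. (u, cycle_of_list c u)) ` set c"
proof -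
  have "map (cycle_of_list c) c = rotate1 c"
    using cyclic_rotation[OF assms, of 1] by simp
  then have step: "cycle_of_list c (c ! i) = c ! ((i + 1) mod length c)" if "i < length c" for i
    using that by (metis nth_map nth_rotate1 Suc_eq_plus1)
  have "cycle_arcs c = (\<lambda>i. (c ! i, c ! ((i + 1) mod length c))) ` {..<length c}"
    unfolding cycle_arcs_def by auto
  also have "\<dots> = (\<lambda>u. (u, cycle_of_list c u)) ` ((!) c ` {..<length c})"
    unfolding image_image using step by (intro image_cong) auto
  also have "(!) c ` {..<length c} = set c"
    by (auto simp: in_set_conv_nth)
  finally show ?thesis .
qed

lemma cycle_arcs_singleton: "cycle_arcs [a] = {(a, a)}"
  unfolding cycle_arcs_def by auto

lemma cycle_decomp_arcs:
  assumes "cycle_decomp I p"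
  shows "p permutes I \<and> (\<exists>C. finite C \<and> (\<forall>c\<in>C. distinct c) \<and>
    (\<forall>c\<in>C. \<forall>c'\<in>C. c \<noteq> c' \<longrightarrow> set c \<inter> set c' = {}) \<and>
    (\<Union>c\<in>C. set c) = I \<and> (\<Union>c\<in>C. cycle_arcs c) = (\<lambda>u. (u, p u)) ` I)"
  using assms
proof induction
  case empty
  show ?case
    by (auto intro: exI[of _ "{}"])
next
  case (comp I p cs)
  then obtain C where C: "finite C" "\<forall>c\<in>C. distinct c"
    "\<forall>c\<in>C. \<forall>c'\<in>C. c \<noteq> c' \<longrightarrow> set c \<inter> set c' = {}"
    "(\<Union>c\<in>C. set c) = I" "(\<Union>c\<in>C. cycle_arcs c) = (\<lambda>u. (u, p u)) ` I"
    by blast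
  have p: "p permutes I"
    using comp.IH by blast
  have "cycle_of_list cs \<circ> p permutes set cs \<union> I"
    using permutes_compose[OF permutes_subset[OF p] permutes_subset[OF cycle_permutes]] by blast
  moreover have "cycle_arcs cs \<union> (\<lambda>u. (u, p u)) ` I =
      (\<lambda>u. (u, (cycle_of_list cs \<circ> p) u)) ` (set cs \<union> I)"
  proof -
    have "(cycle_of_list cs \<circ> p) u = cycle_of_list cs u" if "u \<in> set cs" for u
      using that comp.hyps(3) permutes_not_in[OF p] by (metis comp_apply disjoint_iff)
    moreover have "(cycle_of_list cs \<circ> p) u = p u" if "u \<in> I" for u
      using that comp.hyps(3) permutes_in_image[OF p] id_outside_supp by fastforce
    ultimately show ?thesis
      unfolding cycle_arcs_eq_graph[OF comp.hyps(2)] image_Un by (auto intro!: image_cong)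
  qed
  moreover have "\<forall>c\<in>insert cs C. \<forall>c'\<in>insert cs C. c \<noteq> c' \<longrightarrow> set c \<inter> set c' = {}"
    using C(3,4) comp.hyps(3) by blast
  ultimately show ?case
    using C comp.hyps(2) by (intro conjI exI[of _ "insert cs C"]) (auto simp: o_def)
qed

lemma cycles_of_permutation:
  assumes "finite U" "f permutes U" "\<And>u. u \<in> U \<Longrightarrow> f u \<noteq> u"
  obtains C where "finite C" "\<forall>c\<in>C. distinct c \<and> length c \<ge> 2"
    "\<forall>c\<in>C. \<forall>c'\<in>C. c \<noteq> c' \<longrightarrow> set c \<inter> set c' = {}"
    "(\<Union>c\<in>C. set c) = U" "(\<Union>c\<in>C. cycle_arcs c) = (\<lambda>u. (u, f u)) ` U"
proof -
  obtain C where C: "finite C" "\<forall>c\<in>C. distinct c"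
    "\<forall>c\<in>C. \<forall>c'\<in>C. c \<noteq> c' \<longrightarrow> set c \<inter> set c' = {}"
    "(\<Union>c\<in>C. set c) = U" "(\<Union>c\<in>C. cycle_arcs c) = (\<lambda>u. (u, f u)) ` U"
    using cycle_decomp_arcs[OF cycle_decomposition[OF assms(2,1)]] by blast
  have "length c \<ge> 2" if c: "c \<in> C - {[]}" for c
  proof (rule ccontr)
    assume "\<not> length c \<ge> 2"
    moreover have "length c > 0"
      using c by simp
    ultimately have "length c = 1"
      by linarith
    then obtain a where "c = [a]"
      by (cases c) auto
    then have "(a, a) \<in> (\<Union>c\<in>C. cycle_arcs c)"
      using c by (intro UN_I) (auto simp: cycle_arcs_singleton)
    then have "(a, a) \<in> (\<lambda>u. (u, f u)) ` U"
      using C(5) by simp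
    then have "a \<in> U" "f a = a"
      by auto
    then show False
      using assms(3) by blast
  qed
  moreover have "(\<Union>c\<in>C - {[]}. set c) = (\<Union>c\<in>C. set c)"
    "(\<Union>c\<in>C - {[]}. cycle_arcs c) = (\<Union>c\<in>C. cycle_arcs c)"
    by (auto simp: cycle_arcs_def)
  ultimately show thesis
    using that[of "C - {[]}"] C by simp
qed


lemma disjoint_cycles_arcs:
  assumes "\<forall>c\<in>C. distinct c" "\<forall>c\<in>C. \<forall>c'\<in>C. c \<noteq> c' \<longrightarrow> set c \<inter> set c' = {}"
  defines "M \<equiv> \<Union>c\<in>C. cycle_arcs c"
  shows "single_valued M" "single_valued (M\<inverse>)"
    and "Domain M = (\<Union>c\<in>C. set c)" "Range M = (\<Union>c\<in>C. set c)"
proof -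
  have arc_iff: "(u, v) \<in> M \<longleftrightarrow> (\<exists>c\<in>C. u \<in> set c \<and> v = cycle_of_list c u)" for u v
    unfolding M_def using assms(1) cycle_arcs_eq_graph by fastforce
  have stays: "cycle_of_list c u \<in> set c" if "u \<in> set c" for c :: "'a list" and u
    using that by (simp add: cycle_permutes permutes_in_image)
  have same: "c = c'" if "c \<in> C" "c' \<in> C" "u \<in> set c" "u \<in> set c'" for c c' u
    using assms(2) that by blast
  show "single_valued M"
    using same by (auto simp: single_valued_def arc_iff)
  show "single_valued (M\<inverse>)"
  proof (rule single_valuedI)
    fix u v w
    assume "(u, v) \<in> M\<inverse>" "(u, w) \<in> M\<inverse>"
    then obtain c c' where "c \<in> C" "v \<in> set c" "u = cycle_of_list c v"
      and "c' \<in> C" "w \<in> set c'" "u = cycle_of_list c' w"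
      by (auto simp: arc_iff)
    moreover from this have "c = c'"
      using same stays by metis
    ultimately show "v = w"
      using permutes_inj[OF cycle_permutes] by (metis injD)
  qed
  show "Domain M = (\<Union>c\<in>C. set c)"
    by (force simp: Domain_iff arc_iff)
  show "Range M = (\<Union>c\<in>C. set c)"
    using assms(1) cycle_is_surj by (fastforce simp: Range_iff arc_iff)
qed

lemma obtain_permutation_graph:
  assumes "single_valued M" "single_valued (M\<inverse>)" "Domain M = Range M"
  obtains f where "f permutes Domain M" "M = (\<lambda>u. (u, f u)) ` Domain M"
proof -
  define f where "f u = (if u \<in> Domain M then THE v. (u, v) \<in> M else u)" for u
  have arc: "(u, f u) \<in> M" if "u \<in> Domain M" for u
    using that assms(1) unfolding f_def by (auto dest: single_valuedD intro: theI)
  have f_eq: "f u = v" if "(u, v) \<in> M" for u v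
    using arc[of u] that assms(1) by (auto dest: single_valuedD)
  have "M = (\<lambda>u. (u, f u)) ` Domain M"
    using arc f_eq by force
  moreover have "f permutes Domain M"
  proof (rule bij_imp_permutes)
    show "bij_betw f (Domain M) (Domain M)"
    proof (rule bij_betw_imageI)
      show "inj_on f (Domain M)"
        using arc assms(2) by (intro inj_onI) (metis converse_iff single_valuedD)
      show "f ` Domain M = Domain M"
        using arc f_eq assms(3) by force
    qed
  qed (simp add: f_def)
  ultimately show thesis
    using that by blast
qed

lemma all_equal_card_eq_imp_eq:
  assumes "finite X" "finite Y" "card X = card Y" "\<forall>p\<in>X. \<forall>q\<in>Y. p = q"
  shows "X = Y" "card X \<le> 1"
proof -
  show "X = Y"
  proof (cases "X = {}")
    case True
    then show ?thesis
      using assms(2,3) by simp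
  next
    case False
    then obtain p where "p \<in> X"
      by blast
    moreover have "Y \<noteq> {}"
      using False assms(1-3) by auto
    ultimately have "Y = {p}"
      using assms(4) by fastforce
    then show ?thesis
      using assms(4) \<open>p \<in> X\<close> by fastforce
  qed
  then show "card X \<le> 1"
    using assms(1,4) by (simp add: card_le_Suc0_iff_eq)
qed

lemma domain_eq_range_if_uncovered_unique:
  assumes "finite V" "M \<subseteq> V \<times> V" "single_valued M" "single_valued (M\<inverse>)"
    and "\<forall>p \<in> V - Domain M. \<forall>q \<in> V - Range M. p = q"
  shows "Domain M = Range M" "card (V - Domain M) \<le> 1"
proof -
  have "inj_on fst M" "inj_on snd M"
    using assms(3,4) by (auto intro!: inj_onI dest: single_valuedD)
  then have "card (Domain M) = card (Range M)"
    by (metis card_image fst_eq_Domain snd_eq_Range)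
  moreover have "Domain M \<subseteq> V" "Range M \<subseteq> V"
    using assms(2) by auto
  ultimately have "card (V - Domain M) = card (V - Range M)"
    using assms(1) by (simp add: card_Diff_subset finite_subset)
  then have "V - Domain M = V - Range M" "card (V - Domain M) \<le> 1"
    using all_equal_card_eq_imp_eq[of "V - Domain M" "V - Range M"] assms(1,5) by simp_all
  with \<open>Domain M \<subseteq> V\<close> \<open>Range M \<subseteq> V\<close> show "Domain M = Range M" "card (V - Domain M) \<le> 1"
    by blast+
qed

lemma disjoint_cycles_coverI:
  assumes "finite V" "M \<subseteq> complete_arcs V" "single_valued M" "single_valued (M\<inverse>)"
    and "\<forall>p \<in> V - Domain M. \<forall>q \<in> V - Range M. p = q"
  shows "disjoint_cycles_cover V M"
proof -
  have "M \<subseteq> V \<times> V"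
    using assms(2) unfolding complete_arcs_def by auto
  then have dom: "Domain M = Range M" "card (V - Domain M) \<le> 1"
    using domain_eq_range_if_uncovered_unique[OF assms(1) _ assms(3-5)] by blast+
  obtain f where f: "f permutes Domain M" "M = (\<lambda>u. (u, f u)) ` Domain M"
    using obtain_permutation_graph assms(3,4) dom(1) by blast
  have "Domain M \<subseteq> V"
    using \<open>M \<subseteq> V \<times> V\<close> by auto
  then have fin: "finite (Domain M)"
    using assms(1) by (rule finite_subset)
  have no_loop: "f u \<noteq> u" if "u \<in> Domain M" for u
  proof
    assume "f u = u"
    then have "(u, u) \<in> M"
      using that f(2) by (metis image_eqI)
    then show False
      using assms(2) unfolding complete_arcs_def by blast
  qed
  obtain C where C: "finite C" "\<forall>c\<in>C. distinct c \<and> length c \<ge> 2"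
    "\<forall>c\<in>C. \<forall>c'\<in>C. c \<noteq> c' \<longrightarrow> set c \<inter> set c' = {}"
    "(\<Union>c\<in>C. set c) = Domain M" "(\<Union>c\<in>C. cycle_arcs c) = (\<lambda>u. (u, f u)) ` Domain M"
    by (rule cycles_of_permutation[OF fin f(1) no_loop])
  have "\<forall>c\<in>C. set c \<subseteq> V"
    using C(4) \<open>Domain M \<subseteq> V\<close> by blast
  moreover have "M = (\<Union>c\<in>C. cycle_arcs c)"
    using C(5) f(2) by simp
  moreover have "card (V - (\<Union>c\<in>C. set c)) \<le> 1"
    using C(4) dom(2) by simp
  ultimately show ?thesis
    unfolding disjoint_cycles_cover_def is_cycle_def using C(1-3) by (intro exI[of _ C] conjI) auto
qed

lemma disjoint_cycles_cover_iff:
  assumes "finite V" "M \<subseteq> complete_arcs V"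
  shows "disjoint_cycles_cover V M \<longleftrightarrow>
    single_valued M \<and> single_valued (M\<inverse>) \<and> (\<forall>p \<in> V - Domain M. \<forall>q \<in> V - Range M. p = q)"
proof
  assume "disjoint_cycles_cover V M"
  then obtain C where C: "\<forall>c\<in>C. is_cycle V c" "\<forall>c\<in>C. \<forall>c'\<in>C. c \<noteq> c' \<longrightarrow> set c \<inter> set c' = {}"
    "M = (\<Union>c\<in>C. cycle_arcs c)" "card (V - (\<Union>c\<in>C. set c)) \<le> 1"
    unfolding disjoint_cycles_cover_def by blast
  have "\<forall>c\<in>C. distinct c"
    using C(1) unfolding is_cycle_def by blast
  note arcs = disjoint_cycles_arcs[OF this C(2), folded C(3)]
  show "single_valued M \<and> single_valued (M\<inverse>) \<and> (\<forall>p \<in> V - Domain M. \<forall>q \<in> V - Range M. p = q)"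
    using arcs C(4) assms(1) by (simp add: card_le_Suc0_iff_eq)
qed (use disjoint_cycles_coverI[OF assms] in blast)

theorem theorem5p2:
  fixes V :: "'a set" and A :: "('a \<times> 'a) set"
  assumes "digraph V A" and "card V \<ge> 2"
  shows "min_strong_arc_conn V A 2 (card V - 2) \<longleftrightarrow>
         (\<exists>M. M \<subseteq> complete_arcs V \<and> A = complete_arcs V - M \<and> disjoint_cycles_cover V M)"
proof -
  define M where "M = complete_arcs V - A"
  have "finite V" "M \<subseteq> complete_arcs V" "A = complete_arcs V - M"
    using assms(1) unfolding M_def digraph_def complete_arcs_def by auto
  then have "(\<exists>M'. M' \<subseteq> complete_arcs V \<and> A = complete_arcs V - M' \<and> disjoint_cycles_cover V M') \<longleftrightarrow>
      disjoint_cycles_cover V M"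
    unfolding M_def by (metis Diff_Diff_Int Diff_subset inf.absorb2)
  then show ?thesis
    using min_strong_2_iff[OF assms] disjoint_cycles_cover_iff[OF \<open>finite V\<close> \<open>M \<subseteq> complete_arcs V\<close>]
    unfolding M_def by simp
qed

end
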